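(* Let $n\ge 3$ and $s,t\in S_n$ with $[s,t]=sts^{-1}t^{-1}=(z\;y\;x)$, where $x,y,z$ lie in the same cycle of $s$ in this cyclic order, i.e. $d_s(x,y)+d_s(y,z)+d_s(z,x)=d_s(x,x)$, and assume $\langle s,t\rangle$ is transitive on $\{1,\dots,n\}$. Then the group $\langle s,t\rangle$ is primitive if and only if $s$ is an $n$-cycle and $\gcd\big(d_s(x,y),\,d_s(y,z),\,d_s(z,x)\big)=1$.
   Context: Permutations compose as functions. For $s\in S_n$, $d_s(u,v)=\min\{d\ge1: s^d(u)=v\}$ if $u,v$ lie in the same cycle of $s$, and $\infty$ otherwise. A permutation group $G\le S_n$ is primitive if the only subsets $\Delta\neq\emptyset$ of $\{1,\dots,n\}$ with $g(\Delta)=\Delta$ or $g(\Delta)\cap\Delta=\emptyset$ for every $g\in G$ are the singletons and the whole set. *)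

theory Defs
  imports "HOL-Combinatorics.Cycles" "HOL-Library.Extended_Nat"
begin

definition perm_dist :: "(nat \<Rightarrow> nat) \<Rightarrow> nat \<Rightarrow> nat \<Rightarrow> enat" where
  "perm_dist s u v =
     (if \<exists>d\<ge>1. (s ^^ d) u = v then enat (LEAST d. d \<ge> 1 \<and> (s ^^ d) u = v) else \<infinity>)"

inductive_set gen2 :: "(nat \<Rightarrow> nat) \<Rightarrow> (nat \<Rightarrow> nat) \<Rightarrow> (nat \<Rightarrow> nat) set"
  for s t where
  gen_id: "id \<in> gen2 s t"
| gen_s: "g \<in> gen2 s t \<Longrightarrow> s \<circ> g \<in> gen2 s t"
| gen_t: "g \<in> gen2 s t \<Longrightarrow> t \<circ> g \<in> gen2 s t"
| gen_s_inv: "g \<in> gen2 s t \<Longrightarrow> inv s \<circ> g \<in> gen2 s t"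
| gen_t_inv: "g \<in> gen2 s t \<Longrightarrow> inv t \<circ> g \<in> gen2 s t"

definition transitive_on :: "(nat \<Rightarrow> nat) set \<Rightarrow> nat set \<Rightarrow> bool" where
  "transitive_on G \<Omega> \<longleftrightarrow> (\<forall>u\<in>\<Omega>. \<forall>v\<in>\<Omega>. \<exists>g\<in>G. g u = v)"

definition primitive_on :: "(nat \<Rightarrow> nat) set \<Rightarrow> nat set \<Rightarrow> bool" where
  "primitive_on G \<Omega> \<longleftrightarrow>
     (\<forall>\<Delta>. \<Delta> \<noteq> {} \<and> \<Delta> \<subseteq> \<Omega> \<and> (\<forall>g\<in>G. g ` \<Delta> = \<Delta> \<or> g ` \<Delta> \<inter> \<Delta> = {})
        \<longrightarrow> (\<exists>a. \<Delta> = {a}) \<or> \<Delta> = \<Omega>)"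

end

theory Submission
  imports Defs "HOL-Combinatorics.Orbits"
begin

(* Let G = <s,t>, c = [s,t] = (z y x), a = d_s(x,y), b = d_s(y,z), c' = d_s(z,x);
   the cyclic-order hypothesis says that the s-cycle of x has length L = a + b + c'.
   Put d = gcd(a,b,c').

   (=>) The partition of the points into orbits of s^d is G-invariant: s commutes with s^d,
   and c moves each point only inside its s^d-orbit, so from c t s = s t the maps t s^m and
   s^m t agree up to s^d-orbits. Hence the s^d-orbit of x is a block. It contains s^d x <> x
   because 0 < d < L, so by primitivity it is everything: s is an n-cycle, and s x = s^(dk) x
   gives dk = 1 (mod L), whence d = 1.

   (<=) Translate a nontrivial block by a power of the n-cycle s so that it contains x and a
   second point. The 3-cycle c lies in G, so the block contains y and z as well; then s^a, s^b,
   s^c' stabilise it, hence so does s^gcd(a,b,c') = s, and the block is the whole set. *)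


lemma gen2_permutes:
  assumes "s permutes S" "t permutes S" "g \<in> gen2 s t"
  shows "g permutes S"
  using assms(3)
proof induction
  case gen_id show ?case by (rule permutes_id)
next
  case (gen_s g) show ?case by (rule permutes_compose[OF gen_s.IH assms(1)])
next
  case (gen_t g) show ?case by (rule permutes_compose[OF gen_t.IH assms(2)])
next
  case (gen_s_inv g) show ?case by (rule permutes_compose[OF gen_s_inv.IH permutes_inv[OF assms(1)]])
next
  case (gen_t_inv g) show ?case by (rule permutes_compose[OF gen_t_inv.IH permutes_inv[OF assms(2)]])
qed

lemma gen2_comp:
  assumes "g \<in> gen2 s t" "h \<in> gen2 s t"
  shows "g \<circ> h \<in> gen2 s t"
  using assms(1)
proof induction
  case gen_id show ?case using assms(2) by simp
next
  case (gen_s g) show ?case unfolding comp_assoc by (rule gen2.gen_s[OF gen_s.IH])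
next
  case (gen_t g) show ?case unfolding comp_assoc by (rule gen2.gen_t[OF gen_t.IH])
next
  case (gen_s_inv g) show ?case unfolding comp_assoc by (rule gen2.gen_s_inv[OF gen_s_inv.IH])
next
  case (gen_t_inv g) show ?case unfolding comp_assoc by (rule gen2.gen_t_inv[OF gen_t_inv.IH])
qed

lemma gen2_funpow: "s ^^ k \<in> gen2 s t"
proof (induction k)
  case 0 show ?case unfolding funpow.simps(1) by (rule gen2.gen_id)
next
  case (Suc k) then show ?case unfolding funpow.simps(2) by (rule gen2.gen_s)
qed

lemma gen2_commutator: "s \<circ> t \<circ> inv s \<circ> inv t \<in> gen2 s t"
proof -
  have "s \<circ> (t \<circ> (inv s \<circ> (inv t \<circ> id))) \<in> gen2 s t" by (intro gen2.intros)
  then show ?thesis by (simp add: comp_assoc)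
qed

text \<open>A permutation of a finite set has finite order, so its inverse is one of its powers.\<close>

lemma permutation_inv_funpow:
  assumes "permutation p"
  obtains k where "inv p = p ^^ k"
proof -
  obtain N where N: "p ^^ N = id" "N > 0" using permutation_is_nilpotent[OF assms] .
  then have pN: "p ^^ Suc (N - 1) = id" by simp
  then have "p \<circ> p ^^ (N - 1) = id" by (simp only: funpow.simps(2))
  moreover have "p ^^ (N - 1) \<circ> p = id" using pN by (simp only: funpow_Suc_right)
  ultimately show thesis using that inv_unique_comp by blast
qed


definition preserves_rel :: "('a \<Rightarrow> 'a \<Rightarrow> bool) \<Rightarrow> ('a \<Rightarrow> 'a) \<Rightarrow> bool" where
  "preserves_rel R f \<longleftrightarrow> (\<forall>u v. R u v \<longrightarrow> R (f u) (f v))"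

lemma preserves_rel_comp:
  "preserves_rel R f \<Longrightarrow> preserves_rel R g \<Longrightarrow> preserves_rel R (f \<circ> g)"
  by (simp add: preserves_rel_def)

lemma preserves_rel_funpow: "preserves_rel R f \<Longrightarrow> preserves_rel R (f ^^ k)"
  by (induction k) (auto simp: preserves_rel_def)

text \<open>If both generators respect a relation, so does the whole generated group
  (the inverses being powers of the generators).\<close>

lemma gen2_preserves_rel:
  assumes "permutation s" "permutation t" "preserves_rel R s" "preserves_rel R t"
    and "g \<in> gen2 s t"
  shows "preserves_rel R g"
proof -
  obtain i j where "inv s = s ^^ i" "inv t = t ^^ j"
    using permutation_inv_funpow assms(1,2) by metis
  then have inv: "preserves_rel R (inv s)" "preserves_rel R (inv t)"
    using preserves_rel_funpow assms(3,4) by metis+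
  from assms(5) show ?thesis
  proof induction
    case gen_id show ?case by (simp add: preserves_rel_def)
  next
    case (gen_s g) show ?case by (rule preserves_rel_comp[OF assms(3) gen_s.IH])
  next
    case (gen_t g) show ?case by (rule preserves_rel_comp[OF assms(4) gen_t.IH])
  next
    case (gen_s_inv g) show ?case by (rule preserves_rel_comp[OF inv(1) gen_s_inv.IH])
  next
    case (gen_t_inv g) show ?case by (rule preserves_rel_comp[OF inv(2) gen_t_inv.IH])
  qed
qed


section \<open>Orbit partitions of a permutation\<close>

definition same_orbit :: "('a \<Rightarrow> 'a) \<Rightarrow> 'a \<Rightarrow> 'a \<Rightarrow> bool" where
  "same_orbit p u v \<longleftrightarrow> v \<in> orbit p u"

lemma same_orbit_refl: "permutation p \<Longrightarrow> same_orbit p u u"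
  by (simp add: same_orbit_def permutation_self_in_orbit)

lemma same_orbit_trans: "same_orbit p u v \<Longrightarrow> same_orbit p v w \<Longrightarrow> same_orbit p u w"
  unfolding same_orbit_def by (rule orbit_trans)

lemma same_orbit_funpow:
  assumes "permutation p"
  shows "same_orbit p u ((p ^^ k) u)"
  using assms by (auto simp: same_orbit_def orbit_altdef_permutation)

lemma orbit_eq_of_mem: "permutation p \<Longrightarrow> v \<in> orbit p u \<Longrightarrow> orbit p v = orbit p u"
  by (rule orbit_cyclic_eq3[OF cyclic_on_orbit'])

lemma commuting_preserves_same_orbit:
  assumes "f \<circ> p = p \<circ> f"
  shows "preserves_rel (same_orbit p) f"
  unfolding preserves_rel_def same_orbit_def
proof (intro allI impI)
  have fp: "f (p w) = p (f w)" for w using fun_cong[OF assms, of w] by simp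
  fix u v assume "v \<in> orbit p u"
  then show "f v \<in> orbit p (f u)" by induction (auto simp: fp intro: orbit.intros)
qed

lemma orbit_invariant_or_disjoint:
  assumes p: "permutation p" and "inj g" and g: "preserves_rel (same_orbit p) g"
  shows "g ` orbit p x = orbit p x \<or> g ` orbit p x \<inter> orbit p x = {}"
proof (rule disjCI)
  let ?O = "orbit p x"
  assume "g ` ?O \<inter> ?O \<noteq> {}"
  then obtain u where u: "u \<in> ?O" "g u \<in> ?O" by blast
  have "g ` ?O \<subseteq> orbit p (g u)"
    using g orbit_eq_of_mem[OF p u(1)] by (auto simp: preserves_rel_def same_orbit_def)
  also have "\<dots> = ?O" using orbit_eq_of_mem[OF p u(2)] .
  finally have "g ` ?O \<subseteq> ?O" .
  moreover have "finite ?O" using finite_orbit[OF permutation_self_in_orbit[OF p]] .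
  moreover have "card (g ` ?O) = card ?O" using \<open>inj g\<close> by (simp add: card_image inj_on_subset)
  ultimately show "g ` ?O = ?O" by (simp add: card_subset_eq)
qed

text \<open>The commutator trick: if every point is related to its image under the commutator
  c = [s,t], i.e. s (t u) ~ t (s u), and s respects ~, then s^m t u ~ t s^m u for all m.\<close>

lemma twisted_commutation:
  assumes "reflp R" "transp R" "preserves_rel R s"
    and twist: "\<And>u. R (s (t u)) (t (s u))"
  shows "R ((s ^^ m) (t u)) (t ((s ^^ m) u))"
proof (induction m)
  case 0 then show ?case using assms(1) by (simp add: reflpD)
next
  case (Suc m)
  have "R (s ((s ^^ m) (t u))) (s (t ((s ^^ m) u)))"
    using Suc assms(3) by (simp add: preserves_rel_def)
  with twist[of "(s ^^ m) u"] show ?case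
    using assms(2) by (auto elim: transpE)
qed

lemma gen2_preserves_power_orbits:
  assumes s: "permutation s" and t: "permutation t"
    and comm: "\<And>w. same_orbit (s ^^ d) ((s \<circ> t \<circ> inv s \<circ> inv t) w) w"
    and g: "g \<in> gen2 s t"
  shows "preserves_rel (same_orbit (s ^^ d)) g"
proof (rule gen2_preserves_rel[OF s t _ _ g])
  let ?R = "same_orbit (s ^^ d)"
  have pd: "permutation (s ^^ d)" using s by (rule permutation_funpow)
  show Rs: "preserves_rel ?R s"
    by (rule commuting_preserves_same_orbit) (simp add: fun_eq_iff funpow_swap1)
  have twist: "?R (s (t u)) (t (s u))" for u
    using comm[of "t (s u)"] bij_is_inj[OF permutation_bijective[OF s]]
      bij_is_inj[OF permutation_bijective[OF t]] by simp
  have refl: "reflp ?R" by (rule reflpI) (rule same_orbit_refl[OF pd])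
  have trans: "transp ?R" by (rule transpI) (rule same_orbit_trans)
  show "preserves_rel ?R t" unfolding preserves_rel_def
  proof (intro allI impI)
    fix u v assume "?R u v"
    then obtain k where v: "v = (s ^^ (d * k)) u"
      using pd by (auto simp: same_orbit_def orbit_altdef_permutation funpow_mult)
    have "?R (t u) ((s ^^ (d * k)) (t u))"
      using same_orbit_funpow[OF pd, of "t u" k] by (simp add: funpow_mult)
    moreover have "?R ((s ^^ (d * k)) (t u)) (t v)"
      unfolding v by (rule twisted_commutation[where R="?R" and s=s and t=t, OF refl trans Rs twist])
    ultimately show "?R (t u) (t v)" by (rule same_orbit_trans)
  qed
qed


section \<open>Blocks\<close>

definition is_block :: "('a \<Rightarrow> 'a) set \<Rightarrow> 'a set \<Rightarrow> bool" where
  "is_block G \<Delta> \<longleftrightarrow> (\<forall>g\<in>G. g ` \<Delta> = \<Delta> \<or> g ` \<Delta> \<inter> \<Delta> = {})"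

lemma primitive_on_iff_blocks:
  "primitive_on G \<Omega> \<longleftrightarrow>
     (\<forall>\<Delta>. \<Delta> \<noteq> {} \<longrightarrow> \<Delta> \<subseteq> \<Omega> \<longrightarrow> is_block G \<Delta> \<longrightarrow> (\<exists>a. \<Delta> = {a}) \<or> \<Delta> = \<Omega>)"
  by (auto simp: primitive_on_def is_block_def)

lemma block_translate:
  assumes block: "is_block G \<Delta>" and closed: "\<And>g g'. g \<in> G \<Longrightarrow> g' \<in> G \<Longrightarrow> g \<circ> g' \<in> G"
    and h: "h \<in> G" "h' \<in> G" "h \<circ> h' = id" "h' \<circ> h = id"
  shows "is_block G (h ` \<Delta>)"
  unfolding is_block_def
proof
  fix g assume g: "g \<in> G"
  have inj: "inj h" using h(4) by (metis comp_apply id_apply injI)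
  have "g \<circ> h = h \<circ> (h' \<circ> g \<circ> h)" by (simp add: comp_assoc[symmetric] h(3))
  then have img: "g ` h ` \<Delta> = h ` (h' \<circ> g \<circ> h) ` \<Delta>" by (metis image_comp)
  have "(h' \<circ> g \<circ> h) ` \<Delta> = \<Delta> \<or> (h' \<circ> g \<circ> h) ` \<Delta> \<inter> \<Delta> = {}"
    using block closed g h(1,2) unfolding is_block_def by blast
  then show "g ` h ` \<Delta> = h ` \<Delta> \<or> g ` h ` \<Delta> \<inter> h ` \<Delta> = {}"
  proof
    assume "(h' \<circ> g \<circ> h) ` \<Delta> = \<Delta>"
    then show ?thesis using img by (intro disjI1) simp
  next
    assume "(h' \<circ> g \<circ> h) ` \<Delta> \<inter> \<Delta> = {}"
    then have "h ` ((h' \<circ> g \<circ> h) ` \<Delta> \<inter> \<Delta>) = {}" by simp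
    then show ?thesis by (metis image_Int[OF inj] img)
  qed
qed

lemma three_cycle_apply:
  assumes "distinct [z, y, x]"
  shows "cycle_of_list [z, y, x] x = z" "cycle_of_list [z, y, x] y = x"
    "cycle_of_list [z, y, x] z = y" "w \<notin> {x, y, z} \<Longrightarrow> cycle_of_list [z, y, x] w = w"
  using assms by (auto simp: Transposition.transpose_def)

lemma block_absorbs_three_cycle:
  assumes block: "is_block G E" and c: "cycle_of_list [z, y, x] \<in> G" "distinct [z, y, x]"
    and E: "x \<in> E" "e \<in> E" "e \<noteq> x"
  shows "y \<in> E \<and> z \<in> E"
proof -
  let ?c = "cycle_of_list [z, y, x]"
  note c_simps = three_cycle_apply[OF c(2)]
  have "?c ` E \<inter> E \<noteq> {}"
  proof (cases "e \<in> {y, z}")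
    case True
    then consider "e = y" | "e = z" by blast
    then show ?thesis
    proof cases
      case 1
      then have "x \<in> ?c ` E" using c_simps(2) E(2) by (metis imageI)
      then show ?thesis using E(1) by blast
    next
      case 2
      then have "z \<in> ?c ` E" using c_simps(1) E(1) by (metis imageI)
      then show ?thesis using E(2) 2 by blast
    qed
  next
    case False
    then have "e \<in> ?c ` E \<inter> E" using c_simps(4)[of e] E by (metis IntI imageI insertE)
    then show ?thesis by blast
  qed
  then have "?c ` E = E" using block c(1) unfolding is_block_def by blast
  then show ?thesis using c_simps E(1) by (metis imageI)
qed

text \<open>The exponents k for which f^k stabilises a set are closed under gcd (Bezout).\<close>

lemma funpow_image_gcd:
  assumes a: "(f ^^ a) ` E = E" and b: "(f ^^ b) ` E = E"
  shows "(f ^^ gcd a b) ` E = E"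
proof (cases "a = 0")
  case True then show ?thesis using b by simp
next
  case False
  obtain u v where uv: "a * u = b * v + gcd a b" using bezout_nat[OF False] by blast
  have mult: "(f ^^ (m * k)) ` E = E" if "(f ^^ m) ` E = E" for m k
  proof (induction k)
    case (Suc k)
    have "(f ^^ (m * Suc k)) ` E = (f ^^ m) ` (f ^^ (m * k)) ` E" by (simp add: funpow_add image_comp)
    then show ?case using Suc that by simp
  qed simp
  have "(f ^^ gcd a b) ` E = (f ^^ gcd a b) ` (f ^^ (b * v)) ` E" using mult[OF b] by simp
  also have "\<dots> = (f ^^ (a * u)) ` E" by (simp add: uv funpow_add image_comp add.commute)
  also have "\<dots> = E" using mult[OF a] .
  finally show ?thesis .
qed

lemma orbit_subset_invariant:
  assumes "f ` E \<subseteq> E" "x \<in> E"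
  shows "orbit f x \<subseteq> E"
proof
  fix v assume "v \<in> orbit f x"
  then show "v \<in> E" by induction (use assms in auto)
qed


lemma single_cycle_iff_orbit:
  assumes s: "s permutes S" and fin: "finite S" and x: "x \<in> S"
  shows "(\<exists>cs. distinct cs \<and> set cs = S \<and> s = cycle_of_list cs) \<longleftrightarrow> orbit s x = S"
proof -
  have perm: "permutation s" using s fin permutation_permutes by blast
  show ?thesis
  proof
    assume "\<exists>cs. distinct cs \<and> set cs = S \<and> s = cycle_of_list cs"
    then obtain cs where cs: "distinct cs" "set cs = S" "s = cycle_of_list cs" by blast
    show "orbit s x = S"
    proof
      show "orbit s x \<subseteq> S" by (rule permutes_orbit_subset[OF s x])
      show "S \<subseteq> orbit s x"
      proof
        fix v assume "v \<in> S"
        obtain i k where ik: "i < length cs" "cs ! i = x" "k < length cs" "cs ! k = v"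
          using x \<open>v \<in> S\<close> cs(2) by (metis in_set_conv_nth)
        define j where "j = length cs - i + k"
        have "(s ^^ j) x = rotate j cs ! i"
          using cyclic_rotation[OF cs(1), of j] cs(3) ik(1,2) by (metis nth_map)
        also have "\<dots> = cs ! k" using ik by (simp add: nth_rotate j_def)
        finally show "v \<in> orbit s x" using ik(4) by (auto simp: orbit_altdef_permutation[OF perm])
      qed
    qed
  next
    assume orb: "orbit s x = S"
    let ?cs = "support s x"
    have set_cs: "set ?cs = S"
      using support_set[OF perm] orb by (auto simp: orbit_altdef_permutation[OF perm])
    have "s u = cycle_of_list ?cs u" for u
      using cycle_restrict[OF perm] permutes_not_in[OF s] id_outside_supp[of u ?cs] set_cs
      by (cases "u \<in> S") auto
    then show "\<exists>cs. distinct cs \<and> set cs = S \<and> s = cycle_of_list cs"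
      using cycle_of_permutation[OF perm] set_cs by blast
  qed
qed


section \<open>Primitivity forces a single cycle and coprime distances\<close>

text \<open>If the commutator [s,t] moves points only within s^d-orbits, where 0 < d < L and
  d divides the length L of the s-cycle of x, then the s^d-orbit of x is a nontrivial block;
  under primitivity it must be everything, which forces d = 1 and a single s-cycle.\<close>

lemma primitive_imp_single_orbit:
  fixes s t :: "nat \<Rightarrow> nat"
  assumes s: "s permutes S" and t: "t permutes S" and fin: "finite S" and x: "x \<in> S"
    and comm: "\<And>w. same_orbit (s ^^ d) ((s \<circ> t \<circ> inv s \<circ> inv t) w) w"
    and d: "0 < d" "d < least_power s x" "d dvd least_power s x"
    and prim: "primitive_on (gen2 s t) S"
  shows "d = 1 \<and> orbit s x = S"
proof -
  have ps: "permutation s" and pt: "permutation t"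
    using s t fin permutation_permutes by blast+
  have pd: "permutation (s ^^ d)" using ps by (rule permutation_funpow)
  let ?D = "orbit (s ^^ d) x"
  have block: "is_block (gen2 s t) ?D"
    unfolding is_block_def
    using orbit_invariant_or_disjoint[OF pd permutes_inj[OF gen2_permutes[OF s t]]
        gen2_preserves_power_orbits[OF ps pt comm]] by blast
  have sub: "?D \<subseteq> S" using permutes_orbit_subset[OF permutes_funpow[OF s] x] .
  have xD: "x \<in> ?D" by (rule permutation_self_in_orbit[OF pd])
  have sdD: "(s ^^ d) x \<in> ?D" by (rule orbit.base)
  have "(s ^^ d) x \<noteq> x"
  proof
    assume "(s ^^ d) x = x"
    then have "least_power s x dvd d" by (rule least_power_minimal)
    then have "least_power s x \<le> d" using d(1) by (rule dvd_imp_le)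
    with d(2) show False by simp
  qed
  moreover have "(\<exists>a. ?D = {a}) \<or> ?D = S"
    using prim[unfolded primitive_on_iff_blocks, rule_format, OF _ sub block] xD by blast
  ultimately have DS: "?D = S" using xD sdD by (metis singletonD)
  have "s x \<in> ?D" using DS permutes_in_image[OF s] x by simp
  then obtain k where "((s ^^ d) ^^ k) x = s x"
    unfolding orbit_altdef_permutation[OF pd] by auto
  then have k: "(s ^^ 1) x = (s ^^ (d * k)) x" by (simp add: funpow_mult)
  have "d * k \<noteq> 0"
  proof
    assume "d * k = 0"
    then have "(s ^^ 1) x = x" using k unfolding \<open>d * k = 0\<close> by simp
    then have "least_power s x dvd 1" by (rule least_power_minimal)
    then show False using d by simp
  qed
  then have "(s ^^ (d * k - 1)) x = x"
    using funpow_diff[OF permutes_inj[OF s] _ k] by simp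
  then have "least_power s x dvd d * k - 1" by (rule least_power_minimal)
  then have "d dvd d * k - 1" using d(3) by (rule dvd_trans[rotated])
  then have "d dvd d * k - (d * k - 1)" by (simp add: dvd_diff_nat)
  then have "d = 1" using \<open>d * k \<noteq> 0\<close> by simp
  with DS show ?thesis by simp
qed


section \<open>A single cycle with coprime distances gives primitivity\<close>

text \<open>With s a single cycle through S and the 3-cycle (z y x) in the group, a block through x
  and a second point contains x, y, z; it is then stabilised by s^a, s^b, s^c and hence by
  s^gcd(a,b,c) = s, so it contains the whole s-orbit of x.\<close>

lemma block_through_base_point:
  fixes s t :: "nat \<Rightarrow> nat"
  assumes block: "is_block (gen2 s t) E" and E: "x \<in> E" "e \<in> E" "e \<noteq> x"
    and c: "distinct [z, y, x]" "cycle_of_list [z, y, x] \<in> gen2 s t"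
    and pow: "(s ^^ a) x = y" "(s ^^ b) y = z" "(s ^^ c) z = x"
    and gcd: "gcd (gcd a b) c = 1"
  shows "orbit s x \<subseteq> E"
proof -
  have yz: "y \<in> E \<and> z \<in> E" by (rule block_absorbs_three_cycle[OF block c(2,1) E])
  have stable: "(s ^^ k) ` E = E" if "u \<in> E" "(s ^^ k) u \<in> E" for u k
    using block gen2_funpow[of k s t] that unfolding is_block_def by blast
  have "(s ^^ a) ` E = E" using stable[OF E(1)] pow(1) yz by blast
  moreover have "(s ^^ b) ` E = E" using stable[of y b] pow(2) yz by blast
  moreover have "(s ^^ c) ` E = E" using stable[of z c] pow(3) yz E(1) by blast
  ultimately have "(s ^^ gcd (gcd a b) c) ` E = E" by (intro funpow_image_gcd)
  then have "s ` E \<subseteq> E" using gcd by simp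
  then show ?thesis using E(1) by (rule orbit_subset_invariant)
qed

lemma single_orbit_imp_primitive:
  fixes s t :: "nat \<Rightarrow> nat"
  assumes s: "s permutes S" and fin: "finite S" and orb: "orbit s x = S"
    and c: "distinct [z, y, x]" "cycle_of_list [z, y, x] \<in> gen2 s t"
    and pow: "(s ^^ a) x = y" "(s ^^ b) y = z" "(s ^^ c) z = x"
    and gcd: "gcd (gcd a b) c = 1"
  shows "primitive_on (gen2 s t) S"
  unfolding primitive_on_iff_blocks
proof (intro allI impI)
  fix \<Delta> assume \<Delta>: "\<Delta> \<noteq> {}" "\<Delta> \<subseteq> S" "is_block (gen2 s t) \<Delta>"
  show "(\<exists>q. \<Delta> = {q}) \<or> \<Delta> = S"
  proof (cases "\<exists>q. \<Delta> = {q}")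
    case False
    then obtain p1 p2 where p: "p1 \<in> \<Delta>" "p2 \<in> \<Delta>" "p1 \<noteq> p2" using \<Delta>(1) by blast
    have ps: "permutation s" using s fin permutation_permutes by blast
    have "p1 \<in> orbit s x" using p(1) \<Delta>(2) orb by blast
    then obtain j where j: "(s ^^ j) x = p1" unfolding orbit_altdef_permutation[OF ps] by blast
    obtain N where N: "s ^^ N = id" "N > 0" using permutation_is_nilpotent[OF ps] .
    define h where "h = s ^^ ((N - 1) * j)"
    have "(N - 1) * j + j = N * j" using N(2) by (cases N) auto
    then have "s ^^ ((N - 1) * j + j) = id" by (simp add: funpow_mult[symmetric] N(1))
    then have inv: "h \<circ> s ^^ j = id" "s ^^ j \<circ> h = id"
      unfolding h_def funpow_add[symmetric] by (simp_all only: add.commute)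
    have inj: "inj h" using inv(2) by (metis comp_apply id_apply injI)
    have block: "is_block (gen2 s t) (h ` \<Delta>)"
      unfolding h_def
      by (rule block_translate[OF \<Delta>(3) gen2_comp gen2_funpow gen2_funpow inv[unfolded h_def]])
    have hp1: "h p1 = x" using inv(1) j by (metis comp_apply id_apply)
    then have "x \<in> h ` \<Delta>" using p(1) by blast
    moreover have "h p2 \<in> h ` \<Delta>" using p(2) by blast
    moreover have "h p2 \<noteq> x" using hp1 p(3) inj by (metis injD)
    ultimately have "orbit s x \<subseteq> h ` \<Delta>"
      by (rule block_through_base_point[OF block _ _ _ c pow gcd])
    then have "S \<subseteq> h ` \<Delta>" using orb by simp
    then have "card S \<le> card (h ` \<Delta>)"
      by (rule card_mono[OF finite_imageI[OF finite_subset[OF \<Delta>(2) fin]]])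
    also have "\<dots> = card \<Delta>" using inj by (simp add: card_image inj_on_subset)
    finally have "\<Delta> = S" using card_seteq[OF fin \<Delta>(2)] by blast
    then show ?thesis ..
  qed blast
qed


lemma perm_dist_enatD:
  assumes "perm_dist s u v = enat k"
  shows "1 \<le> k \<and> (s ^^ k) u = v"
proof -
  have ex: "\<exists>d\<ge>1. (s ^^ d) u = v" using assms unfolding perm_dist_def by (metis enat.simps(3))
  then have "k = (LEAST d. 1 \<le> d \<and> (s ^^ d) u = v)" using assms unfolding perm_dist_def by simp
  then show ?thesis using ex by (metis (mono_tags, lifting) LeastI)
qed

lemma perm_dist_self:
  assumes "permutation s"
  shows "perm_dist s u u = enat (least_power s u)"
proof -
  have "\<exists>d\<ge>1. (s ^^ d) u = u"
    using least_power_of_permutation[OF assms, of u] by (intro exI[of _ "least_power s u"]) auto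
  moreover have "(\<lambda>d. 1 \<le> d \<and> (s ^^ d) u = u) = (\<lambda>d. (s ^^ d) u = u \<and> 0 < d)"
    by (auto simp: fun_eq_iff)
  ultimately show ?thesis unfolding perm_dist_def least_power_def by simp
qed

lemma cyclic_order_exponents:
  assumes s: "permutation s"
    and sum: "perm_dist s x y + perm_dist s y z + perm_dist s z x = perm_dist s x x"
  obtains a b c where
    "perm_dist s x y = enat a" "perm_dist s y z = enat b" "perm_dist s z x = enat c"
    "1 \<le> a" "1 \<le> b" "1 \<le> c" "(s ^^ a) x = y" "(s ^^ b) y = z" "(s ^^ c) z = x"
    "least_power s x = a + b + c"
proof -
  have "perm_dist s x y + perm_dist s y z + perm_dist s z x \<noteq> \<infinity>"
    using sum perm_dist_self[OF s] by simp
  then have "perm_dist s x y \<noteq> \<infinity>" "perm_dist s y z \<noteq> \<infinity>" "perm_dist s z x \<noteq> \<infinity>"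
    by (simp_all add: plus_eq_infty_iff_enat)
  then obtain a b c where
    abc: "perm_dist s x y = enat a" "perm_dist s y z = enat b" "perm_dist s z x = enat c"
    unfolding not_infinity_eq by blast
  moreover have "least_power s x = a + b + c" using sum abc perm_dist_self[OF s] by simp
  ultimately show thesis using that perm_dist_enatD by blast
qed

lemma three_cycle_within_power_orbits:
  assumes s: "permutation s" and c: "distinct [z, y, x]"
    and pow: "(s ^^ a) x = y" "(s ^^ b) y = z" "(s ^^ c) z = x"
    and dvd: "d dvd a" "d dvd b" "d dvd c"
  shows "same_orbit (s ^^ d) (cycle_of_list [z, y, x] w) w"
proof -
  have pd: "permutation (s ^^ d)" using s by (rule permutation_funpow)
  have step: "same_orbit (s ^^ d) u ((s ^^ m) u)" if "d dvd m" for u m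
    using that same_orbit_funpow[OF pd] by (auto simp: funpow_mult)
  note c_simps = three_cycle_apply[OF c]
  consider "w = x" | "w = y" | "w = z" | "w \<notin> {x, y, z}" by blast
  then show ?thesis
  proof cases
    case 1 then show ?thesis using step[OF dvd(3), of z] c_simps pow by simp
  next
    case 2 then show ?thesis using step[OF dvd(1), of x] c_simps pow by simp
  next
    case 3 then show ?thesis using step[OF dvd(2), of y] c_simps pow by simp
  next
    case 4 then show ?thesis using same_orbit_refl[OF pd] c_simps(4) by simp
  qed
qed


theorem mainTheorem3:
  fixes n :: nat and s t :: "nat \<Rightarrow> nat" and x y z :: nat
  assumes "n \<ge> 3"
    and "s permutes {1..n}" and "t permutes {1..n}"
    and "distinct [z, y, x]"
    and "s \<circ> t \<circ> inv s \<circ> inv t = cycle_of_list [z, y, x]"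
    and "perm_dist s x y + perm_dist s y z + perm_dist s z x = perm_dist s x x"
    and "transitive_on (gen2 s t) {1..n}"
  shows "primitive_on (gen2 s t) {1..n} \<longleftrightarrow>
           ((\<exists>cs. distinct cs \<and> set cs = {1..n} \<and> s = cycle_of_list cs) \<and>
            gcd (gcd (the_enat (perm_dist s x y)) (the_enat (perm_dist s y z)))
                (the_enat (perm_dist s z x)) = 1)"
proof -
  have s: "s permutes {1..n}" and t: "t permutes {1..n}" and fin: "finite {1..n}"
    using assms(2,3) by simp_all
  have ps: "permutation s" using s fin permutation_permutes by blast
  obtain a b c where abc: "perm_dist s x y = enat a" "perm_dist s y z = enat b"
      "perm_dist s z x = enat c" "1 \<le> a" "1 \<le> b" "1 \<le> c"
      and pow: "(s ^^ a) x = y" "(s ^^ b) y = z" "(s ^^ c) z = x"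
      and L: "least_power s x = a + b + c"
    using cyclic_order_exponents[OF ps assms(6)] by blast
  define d where "d = gcd (gcd a b) c"
  have dvd: "d dvd a" "d dvd b" "d dvd c" unfolding d_def by (meson dvd_trans gcd_dvd1 gcd_dvd2)+
  have c_in: "cycle_of_list [z, y, x] \<in> gen2 s t"
    using gen2_commutator[of s t] unfolding assms(5) .
  have "cycle_of_list [z, y, x] permutes {1..n}"
    using gen2_permutes[OF s t c_in] .
  moreover have "cycle_of_list [z, y, x] x \<noteq> x"
    using three_cycle_apply(1)[OF assms(4)] assms(4) by simp
  ultimately have x: "x \<in> {1..n}" using permutes_not_in by metis
  have "primitive_on (gen2 s t) {1..n} \<longleftrightarrow> d = 1 \<and> orbit s x = {1..n}"
  proof
    assume "primitive_on (gen2 s t) {1..n}"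
    moreover have "0 < d" "d < least_power s x" "d dvd least_power s x"
      using abc dvd L by (auto simp: d_def dest: dvd_imp_le)
    moreover have "same_orbit (s ^^ d) ((s \<circ> t \<circ> inv s \<circ> inv t) w) w" for w
      unfolding assms(5) by (rule three_cycle_within_power_orbits[OF ps assms(4) pow dvd])
    ultimately show "d = 1 \<and> orbit s x = {1..n}"
      using primitive_imp_single_orbit[OF s t fin x] by blast
  next
    assume "d = 1 \<and> orbit s x = {1..n}"
    then show "primitive_on (gen2 s t) {1..n}"
      by (intro single_orbit_imp_primitive[OF s fin _ assms(4) c_in pow]) (simp_all add: d_def)
  qed
  then show ?thesis using single_cycle_iff_orbit[OF s fin x] abc(1-3) d_def by auto
qed

end
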